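(* Let $u,v,w$ be words of length $N$ with $|u|_0=|v|_0=|w|_0=:N_0$ and $N_1:=N-N_0$. For every perfect matching $M$ of $G^N_o(u,w)$: $o_U(M)+o_D(M)+o_R(M)+o_L(M)=N(N-1)/2+N_1$, $\quad o_L(M)+o_D(M)=\mathrm{d}(w)-\mathrm{d}(u)$, $\quad o_U(M)+o_L(M)=N_0(N_0-1)/2+\mathrm{d}(w)$. For every perfect matching $M$ of $G^N_e(v,w)$: $e_U(M)+e_D(M)+e_R(M)+e_L(M)=N(N-1)/2+N_0$, $\quad e_L(M)+e_U(M)=\mathrm{d}(w)-\mathrm{d}(v)$, $\quad e_D(M)+e_L(M)=N_1(N_1-1)/2+\mathrm{d}(w)$.
   Context: Let $N\ge 1$. $G^N$ is the induced subgraph of the square lattice $\mathbb{Z}^2$ formed by $N$ consecutive, horizontally centred rows having $3,5,\dots,2N+1$ vertices from top to bottom. It is bipartite; vertices of the same colour as the leftmost vertex of each row are called odd, the others even. Let $B_1,\dots,B_N$ be the even vertices of the bottom row, $L_1,\dots,L_N$ the leftmost vertices of the rows, and $R_1,\dots,R_N$ the rightmost vertices of the rows, each family numbered from left to right (so $L_1$ is the leftmost vertex of the bottom row and $R_1$ the rightmost vertex of the top row). Words of length $N$ are $u=u_1\cdots u_N\in\{0,1\}^N$; $|u|_0,|u|_1$ count $0$s and $1$s; $\mathrm{d}(u)$ is the number of pairs $i<j$ with $u_i=1,u_j=0$. $G^N_o(u,w)$ is the induced subgraph of $G^N$ obtained by deleting all $R_i$, all $B_i$ with $w_i=0$, and all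 $L_i$ with $u_i=0$. $G^N_e(v,w)$ is the induced subgraph obtained by deleting all $L_i$, all $B_i$ with $w_i=1$, and all $R_i$ with $v_i=1$. For a perfect matching $M$ of $G^N_o(u,w)$, orient each edge from its odd endpoint to its even endpoint; $o_U(M),o_D(M),o_L(M),o_R(M)$ denote the numbers of edges pointing up, down, left, right respectively. For a perfect matching $M$ of $G^N_e(v,w)$, orient each edge from its even endpoint to its odd endpoint; $e_U(M),e_D(M),e_L(M),e_R(M)$ denote the numbers of edges pointing up, down, left, right. *)

theory Defs
  imports Main
begin

text \<open>Vertices are pairs (x, r) :: int \<times> int: r is the row index, r = 1 for the
top row and r = N for the bottom row (rows are numbered from top to bottom), and
x is the horizontal coordinate, the rows being centred at x = 0, so row r consists
of the 2r+1 vertices with -r \<le> x \<le> r.  "Up" means towards smaller r.\<close>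

type_synonym vertex = "int \<times> int"

definition GN :: "nat \<Rightarrow> vertex set" where
  "GN N = {(x, r). 1 \<le> r \<and> r \<le> int N \<and> \<bar>x\<bar> \<le> r}"

definition lattice_adj :: "vertex \<Rightarrow> vertex \<Rightarrow> bool" where
  "lattice_adj p q \<longleftrightarrow> \<bar>fst p - fst q\<bar> + \<bar>snd p - snd q\<bar> = 1"

text \<open>The leftmost vertex (-r, r) of every row has x + r even; these are the odd vertices.\<close>
definition odd_vertex :: "vertex \<Rightarrow> bool" where
  "odd_vertex p \<longleftrightarrow> even (fst p + snd p)"

definition even_vertex :: "vertex \<Rightarrow> bool" where
  "even_vertex p \<longleftrightarrow> odd (fst p + snd p)"

definition Bv :: "nat \<Rightarrow> nat \<Rightarrow> vertex" where
  "Bv N i = (- int N + 2 * int i - 1, int N)"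

definition Lv :: "nat \<Rightarrow> nat \<Rightarrow> vertex" where
  "Lv N i = (- (int N + 1 - int i), int N + 1 - int i)"

definition Rv :: "nat \<Rightarrow> nat \<Rightarrow> vertex" where
  "Rv N i = (int i, int i)"

text \<open>Words of length N over {0,1} are lists of naturals; letter u_i is u ! (i - 1).\<close>
definition is_word :: "nat \<Rightarrow> nat list \<Rightarrow> bool" where
  "is_word N u \<longleftrightarrow> length u = N \<and> set u \<subseteq> {0, 1}"

definition count0 :: "nat list \<Rightarrow> nat" where
  "count0 u = length (filter (\<lambda>a. a = 0) u)"

definition count1 :: "nat list \<Rightarrow> nat" where
  "count1 u = length (filter (\<lambda>a. a = 1) u)"

definition dinv :: "nat list \<Rightarrow> nat" where
  "dinv u = card {(i, j). i < j \<and> j < length u \<and> u ! i = 1 \<and> u ! j = 0}"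

definition Go :: "nat \<Rightarrow> nat list \<Rightarrow> nat list \<Rightarrow> vertex set" where
  "Go N u w = GN N - {Rv N i | i. 1 \<le> i \<and> i \<le> N}
                   - {Bv N i | i. 1 \<le> i \<and> i \<le> N \<and> w ! (i - 1) = 0}
                   - {Lv N i | i. 1 \<le> i \<and> i \<le> N \<and> u ! (i - 1) = 0}"

definition Ge :: "nat \<Rightarrow> nat list \<Rightarrow> nat list \<Rightarrow> vertex set" where
  "Ge N v w = GN N - {Lv N i | i. 1 \<le> i \<and> i \<le> N}
                   - {Bv N i | i. 1 \<le> i \<and> i \<le> N \<and> w ! (i - 1) = 1}
                   - {Rv N i | i. 1 \<le> i \<and> i \<le> N \<and> v ! (i - 1) = 1}"

definition perfect_matching :: "vertex set \<Rightarrow> vertex set set \<Rightarrow> bool" where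
  "perfect_matching V M \<longleftrightarrow>
     (\<forall>e\<in>M. \<exists>p q. e = {p, q} \<and> p \<in> V \<and> q \<in> V \<and> lattice_adj p q) \<and>
     (\<forall>p\<in>V. \<exists>!e. e \<in> M \<and> p \<in> e)"

definition up :: "vertex \<Rightarrow> vertex" where "up p = (fst p, snd p - 1)"
definition down :: "vertex \<Rightarrow> vertex" where "down p = (fst p, snd p + 1)"
definition left :: "vertex \<Rightarrow> vertex" where "left p = (fst p - 1, snd p)"
definition right :: "vertex \<Rightarrow> vertex" where "right p = (fst p + 1, snd p)"

definition count_dir :: "(vertex \<Rightarrow> bool) \<Rightarrow> (vertex \<Rightarrow> vertex) \<Rightarrow> vertex set set \<Rightarrow> nat" where
  "count_dir P dir M = card {e \<in> M. \<exists>p. P p \<and> e = {p, dir p}}"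

definition oU where "oU = count_dir odd_vertex up"
definition oD where "oD = count_dir odd_vertex down"
definition oL where "oL = count_dir odd_vertex left"
definition oR where "oR = count_dir odd_vertex right"
definition eU where "eU = count_dir even_vertex up"
definition eD where "eD = count_dir even_vertex down"
definition eL where "eL = count_dir even_vertex left"
definition eR where "eR = count_dir even_vertex right"

end

theory Submission
  imports Defs
begin

text \<open>Orient every edge of a perfect matching from its endpoint of one colour (the tail)
to the other.  If f changes by a constant under each of the four lattice steps, then summing f
with sign -1 on tails and +1 on heads over the matched region gives, edge by edge, a linear
combination of the four direction counts.  Doing this for f = x and f = row index, and
counting vertices (two per edge), yields three linear equations in U, D, L, R.  Their left-hand
sides are computed from the shape of the region: the full triangle has closed forms, and the
removed boundary vertices are affine in their index, so they contribute sums of the positions of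
the zeros of u, v, w.  For a word with N0 zeros that sum is d(w) + N0(N0+1)/2.\<close>

section \<open>Oriented perfect matchings of lattice regions\<close>

lemma lattice_adj_iff: "lattice_adj p q \<longleftrightarrow> q = up p \<or> q = down p \<or> q = left p \<or> q = right p"
  by (cases p; cases q) (auto simp: lattice_adj_def up_def down_def left_def right_def abs_if)

lemma lattice_adj_dirs [simp]:
  "lattice_adj p (up p)" "lattice_adj p (down p)" "lattice_adj p (left p)" "lattice_adj p (right p)"
  by (auto simp: lattice_adj_iff)

lemma lattice_adj_sym: "lattice_adj p q \<Longrightarrow> lattice_adj q p"
  by (auto simp: lattice_adj_def abs_minus_commute)

lemma lattice_adj_neq: "lattice_adj p q \<Longrightarrow> p \<noteq> q"
  by (auto simp: lattice_adj_def)

lemma even_vertex_iff: "even_vertex p \<longleftrightarrow> \<not> odd_vertex p"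
  by (simp add: even_vertex_def odd_vertex_def)

lemma odd_vertex_lattice_adj: "lattice_adj p q \<Longrightarrow> odd_vertex q \<longleftrightarrow> \<not> odd_vertex p"
  by (cases p) (auto simp: lattice_adj_iff odd_vertex_def up_def down_def left_def right_def)

lemma even_vertex_lattice_adj: "lattice_adj p q \<Longrightarrow> even_vertex q \<longleftrightarrow> \<not> even_vertex p"
  by (cases p) (auto simp: lattice_adj_iff even_vertex_def up_def down_def left_def right_def)

lemma directions_distinct:
  "up p \<noteq> down p" "up p \<noteq> left p" "up p \<noteq> right p"
  "down p \<noteq> left p" "down p \<noteq> right p" "left p \<noteq> right p"
  by (auto simp: up_def down_def left_def right_def prod_eq_iff)

definition dir_edges :: "(vertex \<Rightarrow> bool) \<Rightarrow> (vertex \<Rightarrow> vertex) \<Rightarrow> vertex set set \<Rightarrow> vertex set set"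
  where "dir_edges P d M = {e \<in> M. \<exists>p. P p \<and> e = {p, d p}}"

lemma count_dir_eq_card: "count_dir P d M = card (dir_edges P d M)"
  by (simp add: count_dir_def dir_edges_def)

locale oriented_matching =
  fixes V :: "vertex set" and M :: "vertex set set" and P :: "vertex \<Rightarrow> bool"
  assumes perfect: "perfect_matching V M"
    and finite_V: "finite V"
    and colouring: "\<And>p q. lattice_adj p q \<Longrightarrow> P q \<longleftrightarrow> \<not> P p"
begin

lemma edge_cases:
  assumes "e \<in> M"
  obtains p q where "e = {p, q}" "p \<in> V" "q \<in> V" "lattice_adj p q"
  using assms perfect by (auto simp: perfect_matching_def)

lemma Union_eq: "\<Union>M = V"
proof
  show "\<Union>M \<subseteq> V"
  proof
    fix x assume "x \<in> \<Union>M"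
    then obtain e where "e \<in> M" "x \<in> e" by blast
    then show "x \<in> V" by (elim edge_cases) auto
  qed
  show "V \<subseteq> \<Union>M" using perfect by (auto simp: perfect_matching_def)
qed

lemma finite_M: "finite M"
  using finite_UnionD[of M] by (simp add: Union_eq finite_V)

lemma card_edge:
  assumes "e \<in> M" shows "card e = 2"
proof -
  obtain p q where "e = {p, q}" "lattice_adj p q" using assms by (rule edge_cases)
  then show ?thesis using lattice_adj_neq by simp
qed

lemma edges_disjoint: "pairwise disjnt M"
proof (intro pairwiseI)
  fix A B assume "A \<in> M" "B \<in> M" "A \<noteq> B"
  have "p \<notin> B" if "p \<in> A" for p
  proof
    assume "p \<in> B"
    have "p \<in> V" using \<open>A \<in> M\<close> \<open>p \<in> A\<close> Union_eq by blast
    then show False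
      using perfect \<open>A \<in> M\<close> \<open>B \<in> M\<close> \<open>A \<noteq> B\<close> \<open>p \<in> A\<close> \<open>p \<in> B\<close>
      unfolding perfect_matching_def by blast
  qed
  then show "disjnt A B" by (auto simp: disjnt_def)
qed

lemma dir_edges_disjoint:
  assumes "\<And>p. d p \<noteq> d' p" and "\<And>p. lattice_adj p (d p)" and "\<And>p. lattice_adj p (d' p)"
  shows "dir_edges P d M \<inter> dir_edges P d' M = {}"
proof (rule ccontr)
  assume "dir_edges P d M \<inter> dir_edges P d' M \<noteq> {}"
  then obtain p p' where pp: "P p" "P p'" "{p, d p} = {p', d' p'}"
    by (auto simp: dir_edges_def)
  show False
  proof (cases "p = p'")
    case True
    then show ?thesis using pp assms(1) lattice_adj_neq[OF assms(2)] by (metis doubleton_eq_iff)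
  next
    case False
    then have "p = d' p'" using pp by (auto simp: doubleton_eq_iff)
    then show ?thesis using pp colouring[OF assms(3)] by simp
  qed
qed

lemma edge_dir_cases:
  assumes "e \<in> M"
  shows "e \<in> dir_edges P up M \<union> dir_edges P down M \<union> dir_edges P left M \<union> dir_edges P right M"
proof -
  have oriented: "e \<in> dir_edges P up M \<union> dir_edges P down M \<union> dir_edges P left M \<union> dir_edges P right M"
    if "P a" "e = {a, b}" "lattice_adj a b" for a b
    using that(3) unfolding lattice_adj_iff dir_edges_def
    by (elim disjE) (use that assms in blast)+
  obtain p q where e: "e = {p, q}" "lattice_adj p q" using assms by (rule edge_cases)
  then consider "P p" | "P q" using colouring by blast
  then show ?thesis
  proof cases
    case 1
    then show ?thesis using e by (rule oriented)
  next
    case 2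
    then show ?thesis using e by (intro oriented[of q p]) (auto simp: insert_commute lattice_adj_sym)
  qed
qed

lemma sum_by_direction:
  "(\<Sum>e\<in>M. g e) = (\<Sum>e\<in>dir_edges P up M. g e) + (\<Sum>e\<in>dir_edges P down M. g e)
     + (\<Sum>e\<in>dir_edges P left M. g e) + (\<Sum>e\<in>dir_edges P right M. g e)"
proof -
  have split: "M = dir_edges P up M \<union> dir_edges P down M \<union> dir_edges P left M \<union> dir_edges P right M"
    using edge_dir_cases by (auto simp: dir_edges_def)
  have fin: "finite (dir_edges P d M)" for d
    using finite_M by (simp add: dir_edges_def)
  have disj: "dir_edges P up M \<inter> dir_edges P down M = {}" "dir_edges P up M \<inter> dir_edges P left M = {}"
    "dir_edges P up M \<inter> dir_edges P right M = {}" "dir_edges P down M \<inter> dir_edges P left M = {}"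
    "dir_edges P down M \<inter> dir_edges P right M = {}" "dir_edges P left M \<inter> dir_edges P right M = {}"
    by (rule dir_edges_disjoint; simp add: directions_distinct)+
  show ?thesis
    by (subst split) (simp add: sum.union_disjoint fin disj Int_Un_distrib2)
qed

lemma card_vertices:
  "card V = 2 * (count_dir P up M + count_dir P down M + count_dir P left M + count_dir P right M)"
proof -
  have "card V = (\<Sum>e\<in>M. card e)"
    using card_Union_disjoint[OF edges_disjoint] card_edge Union_eq
    by (simp add: card_ge_0_finite)
  also have "\<dots> = 2 * card M" using card_edge by simp
  also have "card M = (\<Sum>e\<in>M. 1)" by simp
  finally show ?thesis by (simp only: sum_by_direction count_dir_eq_card card_eq_sum)
qed

lemma signed_sum:
  fixes f :: "vertex \<Rightarrow> int"
  assumes "\<And>p. f (up p) = f p + cu" "\<And>p. f (down p) = f p + cd"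
    and "\<And>p. f (left p) = f p + cl" "\<And>p. f (right p) = f p + cr"
  shows "(\<Sum>v\<in>V. if P v then - f v else f v) =
    cu * int (count_dir P up M) + cd * int (count_dir P down M)
      + cl * int (count_dir P left M) + cr * int (count_dir P right M)"
proof -
  define h where "h v = (if P v then - f v else f v)" for v
  have edge_sum: "(\<Sum>e\<in>dir_edges P d M. sum h e) = c * int (count_dir P d M)"
    if shift: "\<And>p. f (d p) = f p + c" and adj: "\<And>p. lattice_adj p (d p)" for d c
  proof -
    have "sum h e = c" if "e \<in> dir_edges P d M" for e
    proof -
      obtain p where p: "P p" "e = {p, d p}"
        using \<open>e \<in> dir_edges P d M\<close> by (auto simp: dir_edges_def)
      have "p \<noteq> d p" "\<not> P (d p)"
        using lattice_adj_neq[OF adj] colouring[OF adj] p(1) by auto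
      then show ?thesis using p shift by (simp add: h_def)
    qed
    then show ?thesis by (simp add: count_dir_eq_card)
  qed
  have "(\<Sum>v\<in>V. h v) = (\<Sum>e\<in>M. sum h e)"
    using sum.Union_disjoint[of M h] finite_M card_edge edges_disjoint Union_eq
    by (simp add: card_ge_0_finite pairwise_def disjnt_def)
  also have "\<dots> = cu * int (count_dir P up M) + cd * int (count_dir P down M)
      + cl * int (count_dir P left M) + cr * int (count_dir P right M)"
    unfolding sum_by_direction
    by (simp only: edge_sum assms lattice_adj_dirs)
  finally show ?thesis by (simp only: h_def)
qed

lemma horizontal_balance:
  "int (count_dir P right M) - int (count_dir P left M) = (\<Sum>v\<in>V. if P v then - fst v else fst v)"
  using signed_sum[of fst 0 0 "-1" 1] by (simp add: up_def down_def left_def right_def)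

lemma vertical_balance:
  "int (count_dir P down M) - int (count_dir P up M) = (\<Sum>v\<in>V. if P v then - snd v else snd v)"
  using signed_sum[of snd "-1" 1 0 0] by (simp add: up_def down_def left_def right_def)

end

section \<open>Binary words\<close>

lemma count0_Nil [simp]: "count0 [] = 0"
  and count0_Cons [simp]: "count0 (a # w) = (if a = 0 then 1 else 0) + count0 w"
  by (simp_all add: count0_def)

lemma count0_le_length: "count0 w \<le> length w"
  by (simp add: count0_def)

definition zero_position_sum :: "nat list \<Rightarrow> nat" where
  "zero_position_sum w = (\<Sum>i<length w. if w ! i = 0 then Suc i else 0)"

lemma count0_eq_sum: "count0 w = (\<Sum>i<length w. if w ! i = 0 then 1 else 0)"
  by (induction w) (simp_all add: sum.lessThan_Suc_shift del: sum.lessThan_Suc)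

lemma zero_position_sum_Cons:
  "zero_position_sum (a # w) = (if a = 0 then 1 else 0) + zero_position_sum w + count0 w"
proof -
  have "(\<Sum>i<length w. if w ! i = 0 then Suc (Suc i) else 0) = zero_position_sum w + count0 w"
    unfolding zero_position_sum_def count0_eq_sum sum.distrib[symmetric] by (rule sum.cong) auto
  then show ?thesis
    by (simp add: zero_position_sum_def sum.lessThan_Suc_shift del: sum.lessThan_Suc)
qed

lemma dinv_Cons: "dinv (a # w) = dinv w + (if a = 1 then count0 w else 0)"
proof -
  let ?D = "\<lambda>u. {(i, j). i < j \<and> j < length u \<and> u ! i = 1 \<and> u ! j = 0}"
  let ?first = "if a = 1 then (\<lambda>j. (0::nat, Suc j)) ` {j. j < length w \<and> w ! j = 0} else {}"
  let ?shift = "\<lambda>(i, j). (Suc i, Suc j)"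
  have split: "?D (a # w) = ?first \<union> ?shift ` ?D w"
  proof (intro set_eqI iffI)
    fix x assume x: "x \<in> ?D (a # w)"
    obtain i j where ij: "x = (i, j)" by fastforce
    with x obtain j' where j: "j = Suc j'" by (cases j) auto
    show "x \<in> ?first \<union> ?shift ` ?D w"
    proof (cases i)
      case 0
      then show ?thesis using x ij j by auto
    next
      case (Suc i')
      then have "(i', j') \<in> ?D w" using x ij j by auto
      then show ?thesis using ij j Suc by (auto intro!: image_eqI[where x="(i', j')"])
    qed
  next
    fix x assume "x \<in> ?first \<union> ?shift ` ?D w"
    then show "x \<in> ?D (a # w)" by (auto split: if_splits)
  qed
  have "dinv (a # w) = card (?first \<union> ?shift ` ?D w)"
    by (simp only: dinv_def split)
  also have "\<dots> = card ?first + card (?shift ` ?D w)"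
  proof (rule card_Un_disjoint)
    have "?D w \<subseteq> {..<length w} \<times> {..<length w}" by auto
    then show "finite (?shift ` ?D w)" using finite_subset by blast
  qed auto
  also have "card (?shift ` ?D w) = dinv w"
    unfolding dinv_def by (rule card_image) (auto simp: inj_on_def)
  also have "card ?first = (if a = 1 then count0 w else 0)"
    by (simp add: card_image inj_on_def count0_def length_filter_conv_card)
  finally show ?thesis by simp
qed

text \<open>The i-th zero of w, at position p_i, is preceded by p_i - i ones.\<close>
lemma dinv_zero_position_sum:
  "set w \<subseteq> {0, 1} \<Longrightarrow> 2 * dinv w + count0 w * (count0 w + 1) = 2 * zero_position_sum w"
proof (induction w)
  case Nil
  then show ?case by (simp add: dinv_def zero_position_sum_def)
next
  case (Cons a w)
  then have "a = 0 \<or> a = 1" by auto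
  with Cons show ?case by (auto simp: dinv_Cons zero_position_sum_Cons algebra_simps)
qed

lemma sum_affine:
  assumes "\<And>i. i < N \<Longrightarrow> g i = c * int (Suc i) + d"
  shows "(\<Sum>i<N. g i) = c * (\<Sum>i<N. int (Suc i)) + d * int N"
  using assms by (simp add: sum.distrib sum_distrib_left del: of_nat_Suc)

lemma sum_zeros_affine:
  assumes "length w = N" and "\<And>i. i < N \<Longrightarrow> g i = c * int (Suc i) + d"
  shows "(\<Sum>i<N. if w ! i = 0 then g i else 0) = c * int (zero_position_sum w) + d * int (count0 w)"
proof -
  have "(\<Sum>i<N. if w ! i = 0 then g i else 0)
      = (\<Sum>i<N. c * int (if w ! i = 0 then Suc i else 0) + d * int (if w ! i = 0 then 1 else 0))"
    using assms(2) by (intro sum.cong) auto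
  also have "\<dots> = c * (\<Sum>i<N. int (if w ! i = 0 then Suc i else 0))
      + d * (\<Sum>i<N. int (if w ! i = 0 then 1 else 0))"
    by (simp only: sum.distrib sum_distrib_left)
  also have "\<dots> = c * int (zero_position_sum w) + d * int (count0 w)"
    using assms(1) by (simp only: zero_position_sum_def count0_eq_sum of_nat_sum)
  finally show ?thesis .
qed

lemma sum_ones_eq:
  fixes g :: "nat \<Rightarrow> 'a :: ab_group_add"
  assumes "is_word N w"
  shows "(\<Sum>i<N. if w ! i = 1 then g i else 0) = (\<Sum>i<N. g i) - (\<Sum>i<N. if w ! i = 0 then g i else 0)"
proof -
  have "(\<Sum>i<N. if w ! i = 1 then g i else 0) = (\<Sum>i<N. g i - (if w ! i = 0 then g i else 0))"
  proof (rule sum.cong)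
    fix i assume "i \<in> {..<N}"
    then have "w ! i \<in> {0, 1}" using assms nth_mem by (auto simp: is_word_def)
    then show "(if w ! i = 1 then g i else 0) = g i - (if w ! i = 0 then g i else 0)" by auto
  qed simp
  then show ?thesis by (simp only: sum_subtractf)
qed

section \<open>The triangle of rows\<close>

definition parity_sign :: "vertex \<Rightarrow> int" where
  "parity_sign p = (if odd_vertex p then 1 else -1)"

lemma GN_eq: "GN N = (\<lambda>(i, x). (x, int (Suc i))) ` (SIGMA i:{..<N}. {- int (Suc i)..int (Suc i)})"
proof (intro set_eqI iffI)
  fix v assume "v \<in> GN N"
  then obtain x r where "v = (x, r)" "1 \<le> r" "r \<le> int N" "\<bar>x\<bar> \<le> r" by (auto simp: GN_def)
  then show "v \<in> (\<lambda>(i, x). (x, int (Suc i))) ` (SIGMA i:{..<N}. {- int (Suc i)..int (Suc i)})"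
    by (auto intro!: image_eqI[where x="(nat (r - 1), x)"])
qed (auto simp: GN_def)

lemma finite_GN: "finite (GN N)"
  by (simp add: GN_eq)

lemma sum_GN_rows:
  "(\<Sum>v\<in>GN N. h v) = (\<Sum>i<N. \<Sum>x\<in>{- int (Suc i)..int (Suc i)}. h (x, int (Suc i)))"
proof -
  have "(\<Sum>v\<in>GN N. h v)
      = (\<Sum>p\<in>(SIGMA i:{..<N}. {- int (Suc i)..int (Suc i)}). h (snd p, int (Suc (fst p))))"
    unfolding GN_eq by (subst sum.reindex) (auto simp: inj_on_def intro!: sum.cong)
  also have "\<dots> = (\<Sum>i<N. \<Sum>x\<in>{- int (Suc i)..int (Suc i)}. h (x, int (Suc i)))"
    by (subst sum.Sigma) (auto simp: case_prod_beta)
  finally show ?thesis .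
qed

lemma sum_alternating_even: "(\<Sum>k\<le>2 * n. (-1 :: int) ^ k) = 1"
  by (induction n) (simp_all add: numeral_2_eq_2)

text \<open>Every row starts and ends with a vertex of positive sign.\<close>
lemma sum_row_parity_sign: "(\<Sum>x\<in>{- int n..int n}. parity_sign (x, int n)) = 1"
proof -
  have "(\<Sum>x\<in>{- int n..int n}. parity_sign (x, int n)) = (\<Sum>k\<le>2 * n. (-1 :: int) ^ k)"
  proof (rule sum.reindex_bij_witness[where j="\<lambda>x. nat (x + int n)" and i="\<lambda>k. int k - int n"])
    fix x assume "x \<in> {- int n..int n}"
    then show "(-1) ^ nat (x + int n) = parity_sign (x, int n)"
      by (simp add: parity_sign_def odd_vertex_def minus_one_power_iff even_nat_iff)
  qed auto
  then show ?thesis by (simp add: sum_alternating_even)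
qed

lemma sum_row_parity_sign_fst: "(\<Sum>x\<in>{- r..r}. parity_sign (x, r) * x) = 0"
proof -
  have sym: "parity_sign (- x, r) = parity_sign (x, r)" for x
    by (simp add: parity_sign_def odd_vertex_def)
  have "(\<Sum>x\<in>{- r..r}. parity_sign (x, r) * x) = (\<Sum>x\<in>{- r..r}. parity_sign (- x, r) * - x)"
    by (rule sum.reindex_bij_witness[where i=uminus and j=uminus]) auto
  also have "\<dots> = - (\<Sum>x\<in>{- r..r}. parity_sign (x, r) * x)"
    by (simp add: sym sum_negf)
  finally show ?thesis by simp
qed

lemma card_GN: "int (card (GN N)) = int N * (int N + 2)"
proof -
  have "int (card (GN N)) = (\<Sum>v\<in>GN N. 1)"
    by simp
  also have "\<dots> = (\<Sum>i<N. 2 * int (Suc i) + 1)"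
    unfolding sum_GN_rows by (rule sum.cong) auto
  also have "\<dots> = int N * (int N + 2)"
    by (induction N) (auto simp: algebra_simps)
  finally show ?thesis .
qed

lemma sum_GN_parity_sign_fst: "(\<Sum>v\<in>GN N. parity_sign v * fst v) = 0"
  by (simp add: sum_GN_rows sum_row_parity_sign_fst del: of_nat_Suc)

lemma sum_GN_parity_sign_snd: "(\<Sum>v\<in>GN N. parity_sign v * snd v) = (\<Sum>i<N. int (Suc i))"
  by (simp add: sum_GN_rows sum_distrib_right[symmetric] sum_row_parity_sign del: of_nat_Suc)

section \<open>The regions with boundary vertices removed\<close>

lemma sum_indexed_family:
  assumes "inj f"
  shows "sum h {f i | i. 1 \<le> i \<and> i \<le> N \<and> Q (i - 1)} = (\<Sum>i<N. if Q i then h (f (Suc i)) else 0)"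
proof -
  have "{f i | i. 1 \<le> i \<and> i \<le> N \<and> Q (i - 1)} = (\<lambda>i. f (Suc i)) ` {i \<in> {..<N}. Q i}"
  proof (intro set_eqI iffI)
    fix y assume "y \<in> {f i | i. 1 \<le> i \<and> i \<le> N \<and> Q (i - 1)}"
    then obtain i where "y = f i" "1 \<le> i" "i \<le> N" "Q (i - 1)" by blast
    then show "y \<in> (\<lambda>i. f (Suc i)) ` {i \<in> {..<N}. Q i}"
      by (intro image_eqI[where x="i - 1"]) auto
  qed force
  moreover have "inj_on (\<lambda>i. f (Suc i)) {i \<in> {..<N}. Q i}"
    using assms by (auto simp: inj_on_def inj_def)
  ultimately have "sum h {f i | i. 1 \<le> i \<and> i \<le> N \<and> Q (i - 1)}
      = (\<Sum>i\<in>{i \<in> {..<N}. Q i}. h (f (Suc i)))"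
    by (simp only: sum.reindex o_def)
  also have "\<dots> = (\<Sum>i<N. if Q i then h (f (Suc i)) else 0)"
    by (rule sum.inter_filter) simp
  finally show ?thesis .
qed

lemma sum_indexed_family_simps:
  assumes "inj f"
  shows "sum h {f i | i. 1 \<le> i \<and> i \<le> N} = (\<Sum>i<N. h (f (Suc i)))"
    and "sum h {f i | i. 1 \<le> i \<and> i \<le> N \<and> w ! (i - 1) = a} = (\<Sum>i<N. if w ! i = a then h (f (Suc i)) else 0)"
  using sum_indexed_family[OF assms, of h N "\<lambda>_. True"] sum_indexed_family[OF assms, of h N "\<lambda>j. w ! j = a"]
  by simp_all

lemma sum_diff_disjoint3:
  fixes h :: "'a \<Rightarrow> 'b :: ab_group_add"
  assumes "finite A" "X \<subseteq> A" "Y \<subseteq> A" "Z \<subseteq> A" "X \<inter> Y = {}" "X \<inter> Z = {}" "Y \<inter> Z = {}"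
  shows "sum h (A - X - Y - Z) = sum h A - sum h X - sum h Y - sum h Z"
proof -
  have fin: "finite X" "finite Y" "finite Z" using assms finite_subset by blast+
  have "A - X - Y - Z = A - (X \<union> Y \<union> Z)" by blast
  then have "sum h (A - X - Y - Z) = sum h A - sum h (X \<union> Y \<union> Z)"
    using assms by (simp add: sum_diff)
  also have "sum h (X \<union> Y \<union> Z) = sum h X + sum h Y + sum h Z"
    using assms fin by (simp add: sum.union_disjoint Int_Un_distrib2)
  finally show ?thesis by (simp add: algebra_simps)
qed

lemma boundary_in_GN:
  "1 \<le> i \<Longrightarrow> i \<le> N \<Longrightarrow> Rv N i \<in> GN N"
  "1 \<le> i \<Longrightarrow> i \<le> N \<Longrightarrow> Bv N i \<in> GN N"
  "1 \<le> i \<Longrightarrow> i \<le> N \<Longrightarrow> Lv N i \<in> GN N"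
  by (auto simp: Rv_def Bv_def Lv_def GN_def)

lemma inj_boundary: "inj (Rv N)" "inj (Bv N)" "inj (Lv N)"
  by (auto simp: inj_def Rv_def Bv_def Lv_def)

lemma boundary_distinct:
  "Rv N i \<noteq> Bv N j" "Bv N j \<noteq> Lv N k" "1 \<le> i \<Longrightarrow> Rv N i \<noteq> Lv N k"
  by (auto simp: Rv_def Bv_def Lv_def) presburger+

lemma finite_Go: "finite (Go N u w)"
  using finite_GN by (simp add: Go_def)

lemma finite_Ge: "finite (Ge N v w)"
  using finite_GN by (simp add: Ge_def)

lemma sum_Go:
  fixes h :: "vertex \<Rightarrow> 'a :: ab_group_add"
  shows "sum h (Go N u w) = sum h (GN N) - (\<Sum>i<N. h (Rv N (Suc i)))
      - (\<Sum>i<N. if w ! i = 0 then h (Bv N (Suc i)) else 0)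
      - (\<Sum>i<N. if u ! i = 0 then h (Lv N (Suc i)) else 0)"
proof -
  let ?R = "{Rv N i | i. 1 \<le> i \<and> i \<le> N}"
  let ?B = "{Bv N i | i. 1 \<le> i \<and> i \<le> N \<and> w ! (i - 1) = 0}"
  let ?L = "{Lv N i | i. 1 \<le> i \<and> i \<le> N \<and> u ! (i - 1) = 0}"
  have "Go N u w = GN N - ?R - ?B - ?L" by (simp add: Go_def)
  moreover have "?R \<inter> ?B = {}" "?R \<inter> ?L = {}" "?B \<inter> ?L = {}"
    using boundary_distinct by blast+
  moreover have "?R \<subseteq> GN N" "?B \<subseteq> GN N" "?L \<subseteq> GN N"
    using boundary_in_GN by blast+
  ultimately show ?thesis
    by (simp only: sum_diff_disjoint3 finite_GN sum_indexed_family_simps inj_boundary if_True)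
qed

lemma sum_Ge:
  fixes h :: "vertex \<Rightarrow> 'a :: ab_group_add"
  shows "sum h (Ge N v w) = sum h (GN N) - (\<Sum>i<N. h (Lv N (Suc i)))
      - (\<Sum>i<N. if w ! i = 1 then h (Bv N (Suc i)) else 0)
      - (\<Sum>i<N. if v ! i = 1 then h (Rv N (Suc i)) else 0)"
proof -
  let ?L = "{Lv N i | i. 1 \<le> i \<and> i \<le> N}"
  let ?B = "{Bv N i | i. 1 \<le> i \<and> i \<le> N \<and> w ! (i - 1) = 1}"
  let ?R = "{Rv N i | i. 1 \<le> i \<and> i \<le> N \<and> v ! (i - 1) = 1}"
  have "Ge N v w = GN N - ?L - ?B - ?R" by (simp add: Ge_def)
  moreover have "?L \<inter> ?B = {}" "?L \<inter> ?R = {}" "?B \<inter> ?R = {}"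
    using boundary_distinct by (subst Int_commute, blast)+
  moreover have "?L \<subseteq> GN N" "?B \<subseteq> GN N" "?R \<subseteq> GN N"
    using boundary_in_GN by blast+
  ultimately show ?thesis
    by (simp only: sum_diff_disjoint3 finite_GN sum_indexed_family_simps inj_boundary if_True)
qed

lemma odd_vertex_Rv [simp]: "odd_vertex (Rv N i)"
  and even_vertex_Bv [simp]: "\<not> odd_vertex (Bv N i)"
  and odd_vertex_Lv [simp]: "odd_vertex (Lv N i)"
  by (simp_all add: odd_vertex_def Rv_def Bv_def Lv_def)

lemma boundary_vertex_simps [simp]:
  "parity_sign (Rv N i) = 1" "fst (Rv N i) = int i" "snd (Rv N i) = int i"
  "parity_sign (Bv N i) = -1" "fst (Bv N i) = 2 * int i - int N - 1" "snd (Bv N i) = int N"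
  "parity_sign (Lv N i) = 1" "fst (Lv N i) = int i - int N - 1" "snd (Lv N i) = int N + 1 - int i"
  by (simp_all add: parity_sign_def, simp_all add: Rv_def Bv_def Lv_def)

lemma card_Go:
  assumes "is_word N u" "is_word N w" "count0 u = count0 w"
  shows "int (card (Go N u w)) = int N * (int N + 1) - 2 * int (count0 w)"
proof -
  have lu: "length u = N" and lw: "length w = N" using assms by (simp_all add: is_word_def)
  have "int (card (Go N u w)) = (\<Sum>v\<in>Go N u w. 1)" by simp
  also have "\<dots> = int N * (int N + 2) - int N - int (count0 w) - int (count0 u)"
    unfolding sum_Go using card_GN[of N] sum_zeros_affine[OF lw, of "\<lambda>_. 1" 0 1]
      sum_zeros_affine[OF lu, of "\<lambda>_. 1" 0 1] by simp
  finally show ?thesis using assms(3) by (simp add: algebra_simps)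
qed

lemma sum_Go_parity_sign_fst:
  assumes "is_word N u" "is_word N w" "count0 u = count0 w"
  shows "(\<Sum>v\<in>Go N u w. parity_sign v * fst v)
    = 2 * int (zero_position_sum w) - int (zero_position_sum u) - (\<Sum>i<N. int (Suc i))"
proof -
  have lu: "length u = N" and lw: "length w = N" using assms by (simp_all add: is_word_def)
  have B: "(\<Sum>i<N. if w ! i = 0 then parity_sign (Bv N (Suc i)) * fst (Bv N (Suc i)) else 0)
      = - 2 * int (zero_position_sum w) + (int N + 1) * int (count0 w)"
    by (rule sum_zeros_affine[OF lw]) (simp add: algebra_simps)
  have L: "(\<Sum>i<N. if u ! i = 0 then parity_sign (Lv N (Suc i)) * fst (Lv N (Suc i)) else 0)
      = 1 * int (zero_position_sum u) + - (int N + 1) * int (count0 u)"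
    by (rule sum_zeros_affine[OF lu]) (simp add: algebra_simps)
  show ?thesis
    unfolding sum_Go B L using sum_GN_parity_sign_fst[of N] assms(3) by (simp add: algebra_simps)
qed

lemma sum_Go_parity_sign_snd:
  assumes "is_word N u" "is_word N w" "count0 u = count0 w"
  shows "(\<Sum>v\<in>Go N u w. parity_sign v * snd v) = int (zero_position_sum u) - int (count0 w)"
proof -
  have lu: "length u = N" and lw: "length w = N" using assms by (simp_all add: is_word_def)
  have B: "(\<Sum>i<N. if w ! i = 0 then parity_sign (Bv N (Suc i)) * snd (Bv N (Suc i)) else 0)
      = 0 * int (zero_position_sum w) + - int N * int (count0 w)"
    by (rule sum_zeros_affine[OF lw]) simp
  have L: "(\<Sum>i<N. if u ! i = 0 then parity_sign (Lv N (Suc i)) * snd (Lv N (Suc i)) else 0)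
      = - 1 * int (zero_position_sum u) + (int N + 1) * int (count0 u)"
    by (rule sum_zeros_affine[OF lu]) (simp add: algebra_simps)
  show ?thesis
    unfolding sum_Go B L using sum_GN_parity_sign_snd[of N] assms(3) by (simp add: algebra_simps)
qed

lemma card_Ge:
  assumes "is_word N v" "is_word N w" "count0 v = count0 w"
  shows "int (card (Ge N v w)) = int N * (int N - 1) + 2 * int (count0 w)"
proof -
  have lv: "length v = N" and lw: "length w = N" using assms by (simp_all add: is_word_def)
  have "int (card (Ge N v w)) = (\<Sum>x\<in>Ge N v w. 1)" by simp
  also have "\<dots> = int N * (int N + 2) - int N - (int N - int (count0 w)) - (int N - int (count0 v))"
    unfolding sum_Ge sum_ones_eq[OF assms(1)] sum_ones_eq[OF assms(2)]
    using card_GN[of N] sum_zeros_affine[OF lw, of "\<lambda>_. 1" 0 1]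
      sum_zeros_affine[OF lv, of "\<lambda>_. 1" 0 1] by simp
  finally show ?thesis using assms(3) by (simp add: algebra_simps)
qed

lemma sum_Ge_parity_sign_fst:
  assumes "is_word N v" "is_word N w"
  shows "(\<Sum>x\<in>Ge N v w. parity_sign x * fst x)
    = int (zero_position_sum v) - 2 * int (zero_position_sum w) + (int N + 1) * int (count0 w)"
proof -
  have lv: "length v = N" and lw: "length w = N" using assms by (simp_all add: is_word_def)
  have L: "(\<Sum>i<N. parity_sign (Lv N (Suc i)) * fst (Lv N (Suc i)))
      = 1 * (\<Sum>i<N. int (Suc i)) + - (int N + 1) * int N"
    by (rule sum_affine) simp
  have B: "(\<Sum>i<N. parity_sign (Bv N (Suc i)) * fst (Bv N (Suc i)))
      = - 2 * (\<Sum>i<N. int (Suc i)) + (int N + 1) * int N"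
    by (rule sum_affine) (simp add: algebra_simps)
  have B0: "(\<Sum>i<N. if w ! i = 0 then parity_sign (Bv N (Suc i)) * fst (Bv N (Suc i)) else 0)
      = - 2 * int (zero_position_sum w) + (int N + 1) * int (count0 w)"
    by (rule sum_zeros_affine[OF lw]) (simp add: algebra_simps)
  have R: "(\<Sum>i<N. parity_sign (Rv N (Suc i)) * fst (Rv N (Suc i))) = 1 * (\<Sum>i<N. int (Suc i)) + 0 * int N"
    by (rule sum_affine) simp
  have R0: "(\<Sum>i<N. if v ! i = 0 then parity_sign (Rv N (Suc i)) * fst (Rv N (Suc i)) else 0)
      = 1 * int (zero_position_sum v) + 0 * int (count0 v)"
    by (rule sum_zeros_affine[OF lv]) simp
  show ?thesis
    unfolding sum_Ge sum_ones_eq[OF assms(1)] sum_ones_eq[OF assms(2)] L B B0 R R0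
    using sum_GN_parity_sign_fst[of N] by (simp add: algebra_simps)
qed

lemma sum_Ge_parity_sign_snd:
  assumes "is_word N v" "is_word N w"
  shows "(\<Sum>x\<in>Ge N v w. parity_sign x * snd x)
    = (\<Sum>i<N. int (Suc i)) + int (zero_position_sum v) - int N - int N * int (count0 w)"
proof -
  have lv: "length v = N" and lw: "length w = N" using assms by (simp_all add: is_word_def)
  have L: "(\<Sum>i<N. parity_sign (Lv N (Suc i)) * snd (Lv N (Suc i)))
      = - 1 * (\<Sum>i<N. int (Suc i)) + (int N + 1) * int N"
    by (rule sum_affine) (simp add: algebra_simps)
  have B: "(\<Sum>i<N. parity_sign (Bv N (Suc i)) * snd (Bv N (Suc i)))
      = 0 * (\<Sum>i<N. int (Suc i)) + - int N * int N"
    by (rule sum_affine) simp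
  have B0: "(\<Sum>i<N. if w ! i = 0 then parity_sign (Bv N (Suc i)) * snd (Bv N (Suc i)) else 0)
      = 0 * int (zero_position_sum w) + - int N * int (count0 w)"
    by (rule sum_zeros_affine[OF lw]) simp
  have R: "(\<Sum>i<N. parity_sign (Rv N (Suc i)) * snd (Rv N (Suc i))) = 1 * (\<Sum>i<N. int (Suc i)) + 0 * int N"
    by (rule sum_affine) simp
  have R0: "(\<Sum>i<N. if v ! i = 0 then parity_sign (Rv N (Suc i)) * snd (Rv N (Suc i)) else 0)
      = 1 * int (zero_position_sum v) + 0 * int (count0 v)"
    by (rule sum_zeros_affine[OF lv]) simp
  show ?thesis
    unfolding sum_Ge sum_ones_eq[OF assms(1)] sum_ones_eq[OF assms(2)] L B B0 R R0
    using sum_GN_parity_sign_snd[of N] by (simp add: algebra_simps)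
qed

section \<open>Counting the oriented edges\<close>

lemma double_int_half_mult_pred: "2 * int (n * (n - 1) div 2) = int n * (int n - 1)"
proof -
  have "even (n * (n - 1))" by (cases "even n") auto
  then have "2 * (n * (n - 1) div 2) = n * (n - 1)" by simp
  then have "2 * int (n * (n - 1) div 2) = int (n * (n - 1))" by (metis of_nat_mult of_nat_numeral)
  then show ?thesis by (cases n) (simp_all add: algebra_simps)
qed

lemma dinv_zero_position_sum_int:
  assumes "is_word N w"
  shows "2 * int (dinv w) + int (count0 w) * (int (count0 w) + 1) = 2 * int (zero_position_sum w)"
proof -
  have "int (2 * dinv w + count0 w * (count0 w + 1)) = int (2 * zero_position_sum w)"
    using dinv_zero_position_sum[of w] assms by (simp add: is_word_def)
  then show ?thesis by (simp add: algebra_simps)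
qed

lemma double_sum_Suc: "2 * (\<Sum>i<N. int (Suc i)) = int N * (int N + 1)"
  by (induction N) (simp_all add: algebra_simps)

lemma Go_matching_counts:
  assumes "is_word N u" "is_word N w" "count0 u = count0 w" "perfect_matching (Go N u w) M"
  shows "oU M + oD M + oR M + oL M = N * (N - 1) div 2 + (N - count0 w)"
    and "int (oL M + oD M) = int (dinv w) - int (dinv u)"
    and "oU M + oL M = count0 w * (count0 w - 1) div 2 + dinv w"
proof -
  interpret oriented_matching "Go N u w" M odd_vertex
    by unfold_locales (simp_all add: assms(4) finite_Go odd_vertex_lattice_adj)
  have sign: "(if odd_vertex p then - f p else f p) = - (parity_sign p * f p)" for p and f :: "vertex \<Rightarrow> int"
    by (simp add: parity_sign_def)
  have x: "int (oR M) - int (oL M) = - (\<Sum>v\<in>Go N u w. parity_sign v * fst v)"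
    using horizontal_balance by (simp add: sign sum_negf oL_def oR_def)
  have y: "int (oD M) - int (oU M) = - (\<Sum>v\<in>Go N u w. parity_sign v * snd v)"
    using vertical_balance by (simp add: sign sum_negf oU_def oD_def)
  have c: "int (card (Go N u w)) = 2 * (int (oU M) + int (oD M) + int (oL M) + int (oR M))"
    using card_vertices by (simp add: oU_def oD_def oL_def oR_def)
  have zN: "count0 w \<le> N" using assms(2) count0_le_length[of w] by (simp add: is_word_def)
  note facts = x y c card_Go[OF assms(1-3)] sum_Go_parity_sign_fst[OF assms(1-3)]
    sum_Go_parity_sign_snd[OF assms(1-3)] double_sum_Suc[of N]
    dinv_zero_position_sum_int[OF assms(1), unfolded assms(3)] dinv_zero_position_sum_int[OF assms(2)]
    double_int_half_mult_pred[of N] double_int_half_mult_pred[of "count0 w"] of_nat_diff[OF zN, where 'a=int]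
  have "int (oU M + oD M + oR M + oL M) = int (N * (N - 1) div 2 + (N - count0 w))"
    unfolding of_nat_add using facts by algebra
  then show "oU M + oD M + oR M + oL M = N * (N - 1) div 2 + (N - count0 w)"
    by (simp only: of_nat_eq_iff)
  show "int (oL M + oD M) = int (dinv w) - int (dinv u)"
    unfolding of_nat_add using facts by algebra
  have "int (oU M + oL M) = int (count0 w * (count0 w - 1) div 2 + dinv w)"
    unfolding of_nat_add using facts by algebra
  then show "oU M + oL M = count0 w * (count0 w - 1) div 2 + dinv w"
    by (simp only: of_nat_eq_iff)
qed

lemma Ge_matching_counts:
  assumes "is_word N v" "is_word N w" "count0 v = count0 w" "perfect_matching (Ge N v w) M"
  shows "eU M + eD M + eR M + eL M = N * (N - 1) div 2 + count0 w"
    and "int (eL M + eU M) = int (dinv w) - int (dinv v)"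
    and "eD M + eL M = (N - count0 w) * (N - count0 w - 1) div 2 + dinv w"
proof -
  interpret oriented_matching "Ge N v w" M even_vertex
    by unfold_locales (simp_all add: assms(4) finite_Ge even_vertex_lattice_adj)
  have sign: "(if even_vertex p then - f p else f p) = parity_sign p * f p" for p and f :: "vertex \<Rightarrow> int"
    by (simp add: parity_sign_def even_vertex_iff)
  have x: "int (eR M) - int (eL M) = (\<Sum>x\<in>Ge N v w. parity_sign x * fst x)"
    using horizontal_balance by (simp add: sign eL_def eR_def)
  have y: "int (eD M) - int (eU M) = (\<Sum>x\<in>Ge N v w. parity_sign x * snd x)"
    using vertical_balance by (simp add: sign eU_def eD_def)
  have c: "int (card (Ge N v w)) = 2 * (int (eU M) + int (eD M) + int (eL M) + int (eR M))"
    using card_vertices by (simp add: eU_def eD_def eL_def eR_def)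
  have zN: "count0 w \<le> N" using assms(2) count0_le_length[of w] by (simp add: is_word_def)
  note facts = x y c card_Ge[OF assms(1-3)] sum_Ge_parity_sign_fst[OF assms(1,2)]
    sum_Ge_parity_sign_snd[OF assms(1,2)] double_sum_Suc[of N]
    dinv_zero_position_sum_int[OF assms(1), unfolded assms(3)] dinv_zero_position_sum_int[OF assms(2)]
    double_int_half_mult_pred[of N] double_int_half_mult_pred[of "N - count0 w"] of_nat_diff[OF zN, where 'a=int]
  have "int (eU M + eD M + eR M + eL M) = int (N * (N - 1) div 2 + count0 w)"
    unfolding of_nat_add using facts by algebra
  then show "eU M + eD M + eR M + eL M = N * (N - 1) div 2 + count0 w"
    by (simp only: of_nat_eq_iff)
  show "int (eL M + eU M) = int (dinv w) - int (dinv v)"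
    unfolding of_nat_add using facts by algebra
  have "int (eD M + eL M) = int ((N - count0 w) * (N - count0 w - 1) div 2 + dinv w)"
    unfolding of_nat_add using facts by algebra
  then show "eD M + eL M = (N - count0 w) * (N - count0 w - 1) div 2 + dinv w"
    by (simp only: of_nat_eq_iff)
qed

theorem theorem3p5:
  fixes N :: nat and u v w :: "nat list"
  assumes "N \<ge> 1"
    and "is_word N u" and "is_word N v" and "is_word N w"
    and "count0 u = count0 w" and "count0 v = count0 w"
  shows "(\<forall>M. perfect_matching (Go N u w) M \<longrightarrow>
            oU M + oD M + oR M + oL M = N * (N - 1) div 2 + (N - count0 w) \<and>
            int (oL M + oD M) = int (dinv w) - int (dinv u) \<and>
            oU M + oL M = count0 w * (count0 w - 1) div 2 + dinv w) \<and>
         (\<forall>M. perfect_matching (Ge N v w) M \<longrightarrow>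
            eU M + eD M + eR M + eL M = N * (N - 1) div 2 + count0 w \<and>
            int (eL M + eU M) = int (dinv w) - int (dinv v) \<and>
            eD M + eL M = (N - count0 w) * (N - count0 w - 1) div 2 + dinv w)"
  using Go_matching_counts[OF assms(2,4,5)] Ge_matching_counts[OF assms(3,4,6)] by blast

end
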